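(* Let $X$, $Y$ be real Banach spaces, $\Omega$ a measure space, $Z:=L^2(\Omega)$, and $e:Y\to Z$ a linear continuous dense embedding. Let $f:X\to\mathbb{R}$ and $g:X\to Y$ be continuously Fréchet differentiable, and assume that $y\mapsto|y|$ is well-defined and continuous on $Y$. Let $(x^k)$ be generated by the augmented Lagrangian algorithm described in the context, where in Step 2 the iterate $x^{k+1}$ is chosen such that $L_{\rho_k}'(x^{k+1},w^k)\to 0$ in $X^*$, and assume $\rho_k\to\infty$. Then every (strong) limit point $\bar x$ of $(x^k)$ which is feasible ($g(\bar x)\le 0$) satisfies the AKKT conditions: there exist sequences $y^k\to\bar x$ in $X$ and $(\mu^k)\subset K_Y^+$ with $f'(y^k)+g'(y^k)^*\mu^k\to 0$ and $\langle\mu^k,g_-(y^k)\rangle\to 0$.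
   Context: The order on $Y$ is induced by $Z$: $K_Y:=\{y\in Y:e(y)\ge 0\text{ a.e.}\}$, $y\le 0$ means $-y\in K_Y$; $K_Y^+:=\{\mu\in Y^*:\langle\mu,y\rangle\ge 0\ \forall y\in K_Y\}$, with $\langle\cdot,\cdot\rangle$ the duality pairing of $Y^*$ and $Y$; $Z\cong Z^*$ is regarded as a subspace of $Y^*$ via $e^*$. For $z\in Z$, $z_+:=\max\{z,0\}$, $z_-:=\max\{-z,0\}$ pointwise; $|y|, y_\pm$ for $y\in Y$ are defined via these pointwise operations ("well-defined on $Y$" means they land in $Y$); $g_-(x):=(g(x))_-$. The augmented Lagrangian is $L_\rho(x,\lambda):=f(x)+\frac{\rho}{2}\|(g(x)+\lambda/\rho)_+\|_Z^2$, with $x$-derivative $f'(x)+g'(x)^*(\lambda+\rho g(x))_+$. Algorithm: (S.0) Choose $(x^0,\lambda^0)\in X\times Z$, $\rho_0>0$, $w^{\max}\in Z$ with $w^{\max}\ge 0$, $\gamma>1$, $\tau\in(0,1)$; $k=0$. (S.2) Choose $w^k\in Z$ with $0\le w^k\le w^{\max}$ a.e. and compute an approximate minimizer $x^{k+1}$ of $L_{\rho_k}(\cdot,w^k)$. (S.3) Set $\lambda^{k+1}:=(w^k+\rho_k g(x^{k+1}))_+$. If $k=0$ or $\|\min\{-g(x^{k+1}),w^k/\rho_k\}\|_Z\le\tau\|\min\{-g(x^k),w^{k-1}/\rho_{k-1}\}\|_Z$ (pointwise min), set $\rho_{k+1}:=\rho_k$; else $\rho_{k+1}:=\gamma\rho_k$.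 (S.4) $k\leftarrow k+1$, go to (S.2). The algorithm is run without stopping. *)

theory Defs
  imports "HOL-Analysis.Analysis"
begin

text \<open>Z = L^2(M), represented by square-integrable measurable real functions
  on the measure space M (modulo a.e. equality, which is handled by stating
  all identities in Z almost everywhere).\<close>

definition inL2 :: "'w measure \<Rightarrow> ('w \<Rightarrow> real) \<Rightarrow> bool" where
  "inL2 M u \<longleftrightarrow> u \<in> borel_measurable M \<and> integrable M (\<lambda>t. (u t)\<^sup>2)"

definition L2norm :: "'w measure \<Rightarrow> ('w \<Rightarrow> real) \<Rightarrow> real" where
  "L2norm M u = sqrt (integral\<^sup>L M (\<lambda>t. (u t)\<^sup>2))"

definition dense_embedding :: "'w measure \<Rightarrow> ('y::real_normed_vector \<Rightarrow> 'w \<Rightarrow> real) \<Rightarrow> bool" where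
  "dense_embedding M e \<longleftrightarrow>
     (\<forall>y. inL2 M (e y)) \<and>
     (\<forall>y z. e (y + z) = (\<lambda>t. e y t + e z t)) \<and>
     (\<forall>c y. e (c *\<^sub>R y) = (\<lambda>t. c * e y t)) \<and>
     (\<exists>C. \<forall>y. L2norm M (e y) \<le> C * norm y) \<and>
     (\<forall>y. (AE t in M. e y t = 0) \<longrightarrow> y = 0) \<and>
     (\<forall>u. inL2 M u \<longrightarrow> (\<forall>\<epsilon>>0. \<exists>y. L2norm M (\<lambda>t. e y t - u t) < \<epsilon>))"

definition KYplus :: "'w measure \<Rightarrow> ('y::real_normed_vector \<Rightarrow> 'w \<Rightarrow> real) \<Rightarrow> ('y \<Rightarrow>\<^sub>L real) set" where
  "KYplus M e = {\<mu>. \<forall>y. (AE t in M. e y t \<ge> 0) \<longrightarrow> blinfun_apply \<mu> y \<ge> 0}"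

definition negY :: "('y::real_normed_vector \<Rightarrow> 'y) \<Rightarrow> 'y \<Rightarrow> 'y" where
  "negY absY y = (1/2) *\<^sub>R (absY y - y)"

end

theory Submission
  imports Defs
begin

(* The multiplier is the updated estimate itself: mu_k is the functional
   y |-> <lambda_(k+1), e y>_Z with lambda_(k+1) = (w_k + rho_k g(x_(k+1)))_+ >= 0, so mu_k lies
   in K_Y^+, and f'(x_(k+1)) + g'(x_(k+1))^* mu_k is exactly the derivative of
   L_(rho_k)(., w_k) at x_(k+1), which tends to 0.  Complementarity comes from a pointwise
   estimate: where g < 0 the product (w + rho g)_+ g_- vanishes unless rho g_- < w, and then
   it is at most w^2/rho <= wmax^2/rho; hence <mu_k, g_-(x_(k+1))> <= ||wmax||^2/rho_k -> 0.
   Restricting to the subsequence that converges to the limit point gives the AKKT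
   sequences. *)

lemma abs_mult_le_half_sum_squares: "\<bar>a * b\<bar> \<le> (a\<^sup>2 + b\<^sup>2) / (2::real)"
  using sum_squares_bound[of "\<bar>a\<bar>" "\<bar>b\<bar>"] by (simp add: abs_mult power2_abs)

lemma inL2_mult_integrable:
  assumes "inL2 M u" "inL2 M v"
  shows "integrable M (\<lambda>t. u t * v t)"
proof (rule Bochner_Integration.integrable_bound[where f="\<lambda>t. ((u t)\<^sup>2 + (v t)\<^sup>2) / 2"])
  show "integrable M (\<lambda>t. ((u t)\<^sup>2 + (v t)\<^sup>2) / 2)" "(\<lambda>t. u t * v t) \<in> borel_measurable M"
    using assms unfolding inL2_def by auto
  show "AE t in M. norm (u t * v t) \<le> norm (((u t)\<^sup>2 + (v t)\<^sup>2) / 2)"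
    using abs_mult_le_half_sum_squares by (intro AE_I2) simp
qed

lemma inL2_add: "inL2 M u \<Longrightarrow> inL2 M v \<Longrightarrow> inL2 M (\<lambda>t. u t + v t)"
proof -
  assume uv: "inL2 M u" "inL2 M v"
  have "integrable M (\<lambda>t. (u t)\<^sup>2 + (v t)\<^sup>2 + 2 * (u t * v t))"
    using uv inL2_mult_integrable[OF uv] unfolding inL2_def by auto
  then show ?thesis
    using uv unfolding inL2_def power2_sum by (auto simp: mult.assoc)
qed

lemma inL2_cmult: "inL2 M u \<Longrightarrow> inL2 M (\<lambda>t. c * u t)"
  unfolding inL2_def power_mult_distrib by auto

lemma inL2_max0: "inL2 M u \<Longrightarrow> inL2 M (\<lambda>t. max (u t) 0)"
  unfolding inL2_def
proof (intro conjI)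
  assume u: "u \<in> borel_measurable M \<and> integrable M (\<lambda>t. (u t)\<^sup>2)"
  then show m: "(\<lambda>t. max (u t) 0) \<in> borel_measurable M" by auto
  show "integrable M (\<lambda>t. (max (u t) 0)\<^sup>2)"
    by (rule Bochner_Integration.integrable_bound[where f="\<lambda>t. (u t)\<^sup>2"])
      (use u m in \<open>auto simp: max_def\<close>)
qed

lemma abs_integral_mult_le_L2:
  assumes "inL2 M u" "inL2 M v"
  shows "\<bar>integral\<^sup>L M (\<lambda>t. u t * v t)\<bar> \<le> (integral\<^sup>L M (\<lambda>t. (u t)\<^sup>2) + integral\<^sup>L M (\<lambda>t. (v t)\<^sup>2)) / 2"
proof -
  have u2: "integrable M (\<lambda>t. (u t)\<^sup>2)" and v2: "integrable M (\<lambda>t. (v t)\<^sup>2)"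
    using assms unfolding inL2_def by auto
  have "\<bar>integral\<^sup>L M (\<lambda>t. u t * v t)\<bar> \<le> integral\<^sup>L M (\<lambda>t. norm (u t * v t))"
    using integral_norm_bound by (metis real_norm_def)
  also have "\<dots> \<le> integral\<^sup>L M (\<lambda>t. ((u t)\<^sup>2 + (v t)\<^sup>2) / 2)"
  proof (rule integral_mono)
    show "integrable M (\<lambda>t. norm (u t * v t))"
      using inL2_mult_integrable[OF assms] by (rule integrable_norm)
    show "integrable M (\<lambda>t. ((u t)\<^sup>2 + (v t)\<^sup>2) / 2)" using u2 v2 by auto
    fix t
    show "norm (u t * v t) \<le> ((u t)\<^sup>2 + (v t)\<^sup>2) / 2"
      using abs_mult_le_half_sum_squares by simp
  qed
  also have "\<dots> = (integral\<^sup>L M (\<lambda>t. (u t)\<^sup>2) + integral\<^sup>L M (\<lambda>t. (v t)\<^sup>2)) / 2"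
    using u2 v2 by simp
  finally show ?thesis .
qed

lemma dense_embedding_inL2: "dense_embedding M e \<Longrightarrow> inL2 M (e y)"
  unfolding dense_embedding_def by (elim conjE) (rule spec)

lemma dense_embedding_add: "dense_embedding M e \<Longrightarrow> e (y + z) = (\<lambda>t. e y t + e z t)"
  unfolding dense_embedding_def by (elim conjE) simp

lemma dense_embedding_scaleR: "dense_embedding M e \<Longrightarrow> e (c *\<^sub>R y) = (\<lambda>t. c * e y t)"
  unfolding dense_embedding_def by (elim conjE) simp

lemma dense_embedding_diff: "dense_embedding M e \<Longrightarrow> e (y - z) = (\<lambda>t. e y t - e z t)"
  using dense_embedding_add[of M e y "(-1) *\<^sub>R z"] dense_embedding_scaleR[of M e "-1" z] by simp

lemma dense_embedding_integral_square_le: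
  assumes "dense_embedding M e"
  obtains C where "\<And>y. integral\<^sup>L M (\<lambda>t. (e y t)\<^sup>2) \<le> (C * norm y)\<^sup>2"
proof -
  have "\<exists>C. \<forall>y. L2norm M (e y) \<le> C * norm y"
    using assms unfolding dense_embedding_def by (elim conjE) assumption
  then obtain C where C: "\<And>y. L2norm M (e y) \<le> C * norm y" by blast
  have "integral\<^sup>L M (\<lambda>t. (e y t)\<^sup>2) \<le> (max C 0 * norm y)\<^sup>2" for y
  proof -
    have "sqrt (integral\<^sup>L M (\<lambda>t. (e y t)\<^sup>2)) \<le> max C 0 * norm y"
      using C[of y] mult_right_mono[of C "max C 0" "norm y"] unfolding L2norm_def by simp
    then have "(sqrt (integral\<^sup>L M (\<lambda>t. (e y t)\<^sup>2)))\<^sup>2 \<le> (max C 0 * norm y)\<^sup>2"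
      by (intro power_mono) auto
    then show ?thesis by simp
  qed
  then show thesis by (rule that)
qed

definition embedded_pairing ::
    "'w measure \<Rightarrow> ('y::real_normed_vector \<Rightarrow> 'w \<Rightarrow> real) \<Rightarrow> ('w \<Rightarrow> real) \<Rightarrow> ('y \<Rightarrow>\<^sub>L real)" where
  "embedded_pairing M e u = Blinfun (\<lambda>y. integral\<^sup>L M (\<lambda>t. u t * e y t))"

lemma bounded_linear_embedded_pairing:
  assumes e: "dense_embedding M e" and u: "inL2 M u"
  shows "bounded_linear (\<lambda>y. integral\<^sup>L M (\<lambda>t. u t * e y t))"
    (is "bounded_linear ?F")
proof -
  obtain C where C: "\<And>y. integral\<^sup>L M (\<lambda>t. (e y t)\<^sup>2) \<le> (C * norm y)\<^sup>2"
    using dense_embedding_integral_square_le[OF e] by blast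
  have scale: "?F (r *\<^sub>R y) = r * ?F y" for r y
    unfolding dense_embedding_scaleR[OF e] by (simp add: mult.left_commute)
  define K where "K = (integral\<^sup>L M (\<lambda>t. (u t)\<^sup>2) + C\<^sup>2) / 2"
  show ?thesis
  proof (rule bounded_linear_intro[where K=K])
    show "?F (y + z) = ?F y + ?F z" for y z
      unfolding dense_embedding_add[OF e] distrib_left
      using inL2_mult_integrable[OF u dense_embedding_inL2[OF e]] by simp
    show "?F (r *\<^sub>R y) = r *\<^sub>R ?F y" for r y using scale by simp
    fix y
    show "norm (?F y) \<le> norm y * K"
    proof (cases "y = 0")
      case True
      then show ?thesis using scale[of 0 0] by simp
    next
      case False
      define y' where "y' = (1 / norm y) *\<^sub>R y"
      have "norm y' = 1" using False unfolding y'_def by simp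
      then have "\<bar>?F y'\<bar> \<le> K"
        using abs_integral_mult_le_L2[OF u dense_embedding_inL2[OF e], of y'] C[of y']
        unfolding K_def by simp
      moreover have "?F y = norm y * ?F y'"
        using scale[of "norm y" y'] False unfolding y'_def by simp
      ultimately show ?thesis
        by (simp add: abs_mult mult.commute[of "norm y"] mult_right_mono)
    qed
  qed
qed

lemma embedded_pairing_apply:
  "dense_embedding M e \<Longrightarrow> inL2 M u \<Longrightarrow>
    blinfun_apply (embedded_pairing M e u) y = integral\<^sup>L M (\<lambda>t. u t * e y t)"
  unfolding embedded_pairing_def by (simp add: bounded_linear_Blinfun_apply bounded_linear_embedded_pairing)

lemma embedded_pairing_KYplus:
  assumes "dense_embedding M e" "inL2 M u" "AE t in M. u t \<ge> 0"
  shows "embedded_pairing M e u \<in> KYplus M e"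
  unfolding KYplus_def
proof safe
  fix y assume "AE t in M. e y t \<ge> 0"
  with assms(3) have "AE t in M. 0 \<le> u t * e y t" by auto
  then show "0 \<le> blinfun_apply (embedded_pairing M e u) y"
    unfolding embedded_pairing_apply[OF assms(1,2)] by (rule integral_nonneg_AE)
qed

lemma max_plus_mult_neg_part_bounds:
  fixes r a w wm :: real
  assumes "r > 0" "0 \<le> w" "w \<le> wm"
  shows "0 \<le> max (w + r * a) 0 * ((\<bar>a\<bar> - a) / 2)"
    and "max (w + r * a) 0 * ((\<bar>a\<bar> - a) / 2) \<le> wm\<^sup>2 / r"
proof -
  consider "a \<ge> 0" | "a < 0" "w + r * a \<le> 0" | "a < 0" "w + r * a > 0" by linarith
  then have "0 \<le> max (w + r * a) 0 * ((\<bar>a\<bar> - a) / 2) \<and>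
             max (w + r * a) 0 * ((\<bar>a\<bar> - a) / 2) \<le> wm\<^sup>2 / r"
  proof cases
    case 3
    have "r * - a < w" using 3 by simp
    then have "(w + r * a) * - a \<le> w * (- a)" using 3 assms mult_pos_neg[of r a] by simp
    also have "\<dots> \<le> w * (w / r)"
      using \<open>r * - a < w\<close> assms by (intro mult_left_mono) (simp_all add: field_simps)
    also have "\<dots> \<le> wm\<^sup>2 / r"
      using assms by (simp add: power2_eq_square[symmetric] divide_right_mono power_mono)
    finally show ?thesis using 3 mult_pos_neg[of "w + r * a" a] by simp
  qed (use assms in auto)
  then show "0 \<le> max (w + r * a) 0 * ((\<bar>a\<bar> - a) / 2)"
    and "max (w + r * a) 0 * ((\<bar>a\<bar> - a) / 2) \<le> wm\<^sup>2 / r" by auto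
qed

lemma embedded_pairing_negY_bounds:
  fixes y :: "'y::real_normed_vector"
  assumes e: "dense_embedding M e" and absY: "AE t in M. e (absY y) t = \<bar>e y t\<bar>"
    and w: "inL2 M w" "AE t in M. 0 \<le> w t \<and> w t \<le> wm t" and wm: "inL2 M wm" and r: "r > 0"
  defines "\<Lambda> \<equiv> \<lambda>t. max (w t + r * e y t) 0"
  shows "0 \<le> blinfun_apply (embedded_pairing M e \<Lambda>) (negY absY y)"
    and "blinfun_apply (embedded_pairing M e \<Lambda>) (negY absY y) \<le> integral\<^sup>L M (\<lambda>t. (wm t)\<^sup>2) / r"
proof -
  have \<Lambda>: "inL2 M \<Lambda>"
    unfolding \<Lambda>_def by (intro inL2_max0 inL2_add inL2_cmult w dense_embedding_inL2[OF e])
  have meas: "\<Lambda> \<in> borel_measurable M" "e y \<in> borel_measurable M" "e (absY y) \<in> borel_measurable M"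
    using \<Lambda> dense_embedding_inL2[OF e] unfolding inL2_def by auto
  have wm2: "integrable M (\<lambda>t. (wm t)\<^sup>2 / r)" using wm unfolding inL2_def by auto
  define h where "h t = \<Lambda> t * ((\<bar>e y t\<bar> - e y t) / 2)" for t
  have h_meas: "h \<in> borel_measurable M" unfolding h_def using meas by auto
  have "e (negY absY y) = (\<lambda>t. (e (absY y) t - e y t) / 2)"
    unfolding negY_def dense_embedding_scaleR[OF e] dense_embedding_diff[OF e] by simp
  then have "blinfun_apply (embedded_pairing M e \<Lambda>) (negY absY y) = integral\<^sup>L M h"
    unfolding embedded_pairing_apply[OF e \<Lambda>]
    by (intro integral_cong_AE) (use meas h_meas absY in \<open>auto simp: h_def\<close>)
  moreover have h_bounds: "AE t in M. 0 \<le> h t \<and> h t \<le> (wm t)\<^sup>2 / r"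
    using w(2) by eventually_elim (use max_plus_mult_neg_part_bounds r in \<open>auto simp: h_def \<Lambda>_def\<close>)
  moreover have "integrable M h"
  proof (rule Bochner_Integration.integrable_bound[OF wm2 h_meas])
    show "AE t in M. norm (h t) \<le> norm ((wm t)\<^sup>2 / r)"
      using h_bounds by eventually_elim (use r in auto)
  qed
  ultimately show "0 \<le> blinfun_apply (embedded_pairing M e \<Lambda>) (negY absY y)"
    and "blinfun_apply (embedded_pairing M e \<Lambda>) (negY absY y) \<le> integral\<^sup>L M (\<lambda>t. (wm t)\<^sup>2) / r"
    using integral_nonneg_AE[of h M] integral_mono_AE[OF _ wm2, of h] by auto
qed

lemma embedded_pairing_negY_tendsto_0:
  fixes y :: "nat \<Rightarrow> 'y::real_normed_vector"
  assumes e: "dense_embedding M e" and absY: "\<And>z. AE t in M. e (absY z) t = \<bar>e z t\<bar>"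
    and w: "\<And>k. inL2 M (w k)" "\<And>k. AE t in M. 0 \<le> w k t \<and> w k t \<le> wm t" and wm: "inL2 M wm"
    and \<rho>: "filterlim \<rho> at_top sequentially"
  shows "(\<lambda>k. blinfun_apply (embedded_pairing M e (\<lambda>t. max (w k t + \<rho> k * e (y k) t) 0))
            (negY absY (y k))) \<longlonglongrightarrow> 0"
proof (rule tendsto_sandwich[OF _ _ tendsto_const])
  have pos: "\<forall>\<^sub>F k in sequentially. \<rho> k > 0"
    using \<rho> by (rule filterlim_at_top_dense[THEN iffD1, rule_format])
  show "\<forall>\<^sub>F k in sequentially. 0 \<le> blinfun_apply (embedded_pairing M e (\<lambda>t. max (w k t + \<rho> k * e (y k) t) 0))
            (negY absY (y k))"
    using pos by eventually_elim (rule embedded_pairing_negY_bounds(1)[OF e absY w wm])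
  show "\<forall>\<^sub>F k in sequentially. blinfun_apply (embedded_pairing M e (\<lambda>t. max (w k t + \<rho> k * e (y k) t) 0))
            (negY absY (y k)) \<le> integral\<^sup>L M (\<lambda>t. (wm t)\<^sup>2) / \<rho> k"
    using pos by eventually_elim (rule embedded_pairing_negY_bounds(2)[OF e absY w wm])
  show "(\<lambda>k. integral\<^sup>L M (\<lambda>t. (wm t)\<^sup>2) / \<rho> k) \<longlonglongrightarrow> 0"
    by (rule tendsto_divide_0[OF tendsto_const filterlim_at_top_imp_at_infinity[OF \<rho>]])
qed

lemma LIMSEQ_subseq_Suc:
  assumes "strict_mono \<phi>" "(x \<circ> \<phi>) \<longlonglongrightarrow> l"
  obtains \<psi> where "strict_mono \<psi>" "(\<lambda>k. x (Suc (\<psi> k))) \<longlonglongrightarrow> l"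
proof
  define \<psi> where "\<psi> k = \<phi> (Suc k) - 1" for k
  have Suc_\<psi>: "Suc (\<psi> k) = \<phi> (Suc k)" for k
    using seq_suble[OF assms(1), of "Suc k"] unfolding \<psi>_def by simp
  show "strict_mono \<psi>"
    unfolding strict_mono_Suc_iff
    using assms(1) Suc_\<psi> by (metis Suc_less_eq lessI strict_mono_less)
  show "(\<lambda>k. x (Suc (\<psi> k))) \<longlonglongrightarrow> l"
    using LIMSEQ_Suc[OF assms(2)] by (simp add: Suc_\<psi>)
qed

theorem theorem6p4:
  fixes M :: "'w measure"
    and e :: "'y::banach \<Rightarrow> 'w \<Rightarrow> real"
    and f :: "'x::banach \<Rightarrow> real" and f' :: "'x \<Rightarrow> ('x \<Rightarrow>\<^sub>L real)"
    and g :: "'x \<Rightarrow> 'y" and g' :: "'x \<Rightarrow> ('x \<Rightarrow>\<^sub>L 'y)"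
    and absY :: "'y \<Rightarrow> 'y"
    and x :: "nat \<Rightarrow> 'x" and lam w :: "nat \<Rightarrow> 'w \<Rightarrow> real" and \<rho> :: "nat \<Rightarrow> real"
    and wmax :: "'w \<Rightarrow> real" and \<gamma> \<tau> :: real
    and xbar :: 'x
  assumes emb: "dense_embedding M e"
    and f_deriv: "\<And>z. (f has_derivative blinfun_apply (f' z)) (at z)"
    and f'_cont: "continuous_on UNIV f'"
    and g_deriv: "\<And>z. (g has_derivative blinfun_apply (g' z)) (at z)"
    and g'_cont: "continuous_on UNIV g'"
    and absY: "\<And>y. AE t in M. e (absY y) t = \<bar>e y t\<bar>"
    and absY_cont: "continuous_on UNIV absY"
    and lam0: "inL2 M (lam 0)"
    and rho0: "\<rho> 0 > 0"
    and wmax: "inL2 M wmax" "AE t in M. wmax t \<ge> 0"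
    and gamma: "\<gamma> > 1" and tau: "0 < \<tau>" "\<tau> < 1"
    and w_Z: "\<And>k. inL2 M (w k)"
    and w_bounds: "\<And>k. AE t in M. 0 \<le> w k t \<and> w k t \<le> wmax t"
    and lam_upd: "\<And>k. AE t in M. lam (Suc k) t = max (w k t + \<rho> k * e (g (x (Suc k))) t) 0"
    and rho_upd: "\<And>k. \<rho> (Suc k) =
        (if k = 0 \<or> L2norm M (\<lambda>t. min (- e (g (x (Suc k))) t) (w k t / \<rho> k))
                     \<le> \<tau> * L2norm M (\<lambda>t. min (- e (g (x k)) t) (w (k - 1) t / \<rho> (k - 1)))
         then \<rho> k else \<gamma> * \<rho> k)"
    and approx_min: "(\<lambda>k. onorm (\<lambda>h. blinfun_apply (f' (x (Suc k))) h
            + integral\<^sup>L M (\<lambda>t. max (w k t + \<rho> k * e (g (x (Suc k))) t) 0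
                                 * e (blinfun_apply (g' (x (Suc k))) h) t)))
          \<longlonglongrightarrow> 0"
    and rho_inf: "filterlim \<rho> at_top sequentially"
    and limpt: "\<exists>\<phi>. strict_mono \<phi> \<and> (x \<circ> \<phi>) \<longlonglongrightarrow> xbar"
    and feasible: "AE t in M. e (g xbar) t \<le> 0"
  shows "\<exists>y :: nat \<Rightarrow> 'x. \<exists>\<mu> :: nat \<Rightarrow> ('y \<Rightarrow>\<^sub>L real).
           y \<longlonglongrightarrow> xbar \<and> (\<forall>k. \<mu> k \<in> KYplus M e) \<and>
           (\<lambda>k. norm (f' (y k) + (\<mu> k o\<^sub>L g' (y k)))) \<longlonglongrightarrow> 0 \<and>
           (\<lambda>k. blinfun_apply (\<mu> k) (negY absY (g (y k)))) \<longlonglongrightarrow> 0"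
proof -
  define \<mu> where "\<mu> k = embedded_pairing M e (\<lambda>t. max (w k t + \<rho> k * e (g (x (Suc k))) t) 0)" for k
  have estimate_L2: "inL2 M (\<lambda>t. max (w k t + \<rho> k * e (g (x (Suc k))) t) 0)" for k
    by (intro inL2_max0 inL2_add inL2_cmult w_Z dense_embedding_inL2[OF emb])
  have \<mu>_KYplus: "\<mu> k \<in> KYplus M e" for k
    unfolding \<mu>_def by (rule embedded_pairing_KYplus[OF emb estimate_L2]) simp
  have stationarity: "(\<lambda>k. norm (f' (x (Suc k)) + (\<mu> k o\<^sub>L g' (x (Suc k))))) \<longlonglongrightarrow> 0"
    using approx_min
    by (simp add: \<mu>_def norm_blinfun.rep_eq plus_blinfun.rep_eq embedded_pairing_apply[OF emb estimate_L2])
  have complementarity: "(\<lambda>k. blinfun_apply (\<mu> k) (negY absY (g (x (Suc k))))) \<longlonglongrightarrow> 0"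
    unfolding \<mu>_def by (rule embedded_pairing_negY_tendsto_0[OF emb absY w_Z w_bounds wmax(1) rho_inf])
  obtain \<phi> where "strict_mono \<phi>" "(x \<circ> \<phi>) \<longlonglongrightarrow> xbar"
    using limpt by blast
  then obtain \<psi> where \<psi>: "strict_mono \<psi>" "(\<lambda>k. x (Suc (\<psi> k))) \<longlonglongrightarrow> xbar"
    by (rule LIMSEQ_subseq_Suc)
  show ?thesis
    using \<psi>(2) \<mu>_KYplus LIMSEQ_subseq_LIMSEQ[OF stationarity \<psi>(1)]
      LIMSEQ_subseq_LIMSEQ[OF complementarity \<psi>(1)]
    by (intro exI[of _ "\<lambda>k. x (Suc (\<psi> k))"] exI[of _ "\<lambda>k. \<mu> (\<psi> k)"]) (simp add: o_def)
qed

end
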